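(* Let $A$ be an $n\times n$ dilation matrix and let $\mu$ be the smallest singular value of $A$. If $\mu>2\sqrt n$, then $A$ yields a radix representation of $\mathbb{Z}^n$ with digit set $D=A(F)\cap\mathbb{Z}^n$, where $F=[-\tfrac12,\tfrac12)^n$; that is, for every $x\in\mathbb{Z}^n$ there exist $N\ge0$ and $d_0,\dots,d_N\in D$ with $x=\sum_{j=0}^NA^jd_j$.
   Context: A dilation matrix is an $n\times n$ matrix with integer entries all of whose eigenvalues $\lambda$ satisfy $|\lambda|>1$. $D$ is a complete set of coset representatives of $\mathbb{Z}^n/A(\mathbb{Z}^n)$. A matrix $A$ yields a radix representation with digit set $D$ if for every $x_0\in\mathbb{Z}^n$ the Euclidean algorithm $x_j=Ax_{j+1}+r_j$ ($x_{j+1}\in\mathbb{Z}^n$, $r_j\in D$, uniquely determined) terminates, i.e. $x_j=r_j=\mathbf 0$ for all sufficiently large $j$; equivalently every $x\in\mathbb{Z}^n$ is a finite sum $\sum_{j=0}^N A^jd_j$ with $d_j\in D$. *)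

theory Defs
  imports "HOL-Analysis.Analysis"
begin

primrec matpow :: "'a::semiring_1 ^'n^'n \<Rightarrow> nat \<Rightarrow> 'a^'n^'n" where
  "matpow A 0 = mat 1"
| "matpow A (Suc k) = A ** matpow A k"

definition dilation_matrix :: "int^'n^'n \<Rightarrow> bool" where
  "dilation_matrix A \<longleftrightarrow>
     (\<forall>(lam::complex) (v::complex^'n). v \<noteq> 0 \<and> map_matrix of_int A *v v = lam *s v \<longrightarrow> cmod lam > 1)"

definition singular_values :: "real^'n^'n \<Rightarrow> real set" where
  "singular_values A =
     {sqrt lam | lam. \<exists>v::real^'n. v \<noteq> 0 \<and> (transpose A ** A) *v v = lam *s v}"

definition smallest_singular_value :: "real^'n^'n \<Rightarrow> real" where
  "smallest_singular_value A = Min (singular_values A)"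

definition real_vec :: "int^'n \<Rightarrow> real^'n" where
  "real_vec x = (\<chi> i. real_of_int (x $ i))"

definition half_cube_digits :: "int^'n^'n \<Rightarrow> (int^'n) set" where
  "half_cube_digits A =
     {d. \<exists>y::real^'n. (\<forall>i. -1/2 \<le> y $ i \<and> y $ i < 1/2) \<and> real_vec d = map_matrix real_of_int A *v y}"

definition complete_residue_system :: "int^'n^'n \<Rightarrow> (int^'n) set \<Rightarrow> bool" where
  "complete_residue_system A D \<longleftrightarrow>
     (\<forall>x::int^'n. \<exists>!d. d \<in> D \<and> (\<exists>y::int^'n. x = A *v y + d))"

definition radix_representation :: "int^'n^'n \<Rightarrow> (int^'n) set \<Rightarrow> bool" where
  "radix_representation A D \<longleftrightarrow> complete_residue_system A D \<and>
     (\<forall>x::int^'n. \<exists>(N::nat) (ds::nat \<Rightarrow> int^'n).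
        (\<forall>j\<le>N. ds j \<in> D) \<and> x = (\<Sum>j\<le>N. matpow A j *v ds j))"

end

theory Submission
  imports Defs
begin

(* Let B be the real matrix of A and \<mu> its smallest singular value.  First, spectral facts: \<mu> |v| \<le> |B v| for all v, proved variationally (the
   minimum of |B v|^2 on the unit sphere is an eigenvalue of B\<^sup>T B), so B is invertible
   when \<mu> > 0.  Second, lattice geometry of F = [-1/2,1/2)^n: every real vector is a lattice
   point plus a point of F, uniquely, and points of F have norm at most sqrt n / 2.  This
   gives division with remainder x = A z + d with d \<in> D = A(F) \<inter> Z^n, making D a complete
   residue system.  Third, the descent: if \<mu> > 2 sqrt n then either |x| < \<mu>/2 and x is
   itself a digit, or the quotient z is strictly shorter than x; induction on the integer
   |x|^2 yields the finite expansion. *)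

lemma inner_matrix_gram:
  fixes B :: "real^'n^'n"
  shows "inner (B *v x) (B *v y) = inner x ((transpose B ** B) *v y)"
proof -
  have "inner (B *v x) (B *v y) = inner (x v* transpose B) (B *v y)" by simp
  also have "\<dots> = inner x (transpose B *v (B *v y))" by (rule dot_lmul_matrix)
  finally show ?thesis by (simp add: matrix_vector_mul_assoc)
qed

lemma gram_self_adjoint:
  fixes B :: "real^'n^'n"
  shows "inner ((transpose B ** B) *v x) y = inner x ((transpose B ** B) *v y)"
  by (metis inner_commute inner_matrix_gram)

(* A self-adjoint matrix has finitely many eigenvalues: eigenvectors for distinct
   eigenvalues are orthogonal, hence linearly independent. *)
lemma self_adjoint_eigenvalues_finite:
  fixes M :: "real^'n^'n"
  assumes self_adjoint: "\<And>x y. inner (M *v x) y = inner x (M *v y)"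
  shows "finite {lam. \<exists>v. v \<noteq> 0 \<and> M *v v = lam *s v}"
proof -
  define E where "E = {lam. \<exists>v. v \<noteq> 0 \<and> M *v v = lam *s v}"
  define ev where "ev lam = (SOME v. v \<noteq> 0 \<and> M *v v = lam *s v)" for lam
  have ev: "ev lam \<noteq> 0 \<and> M *v ev lam = lam *s ev lam" if "lam \<in> E" for lam
    using that unfolding E_def ev_def by (metis (mono_tags, lifting) mem_Collect_eq someI_ex)
  have orth: "inner (ev a) (ev b) = 0" if "a \<in> E" "b \<in> E" "a \<noteq> b" for a b
  proof -
    have "a * inner (ev a) (ev b) = inner (M *v ev a) (ev b)"
      using ev[OF that(1)] by (simp add: scalar_mult_eq_scaleR)
    also have "\<dots> = inner (ev a) (M *v ev b)" by (rule self_adjoint)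
    also have "\<dots> = b * inner (ev a) (ev b)"
      using ev[OF that(2)] by (simp add: scalar_mult_eq_scaleR)
    finally have "(a - b) * inner (ev a) (ev b) = 0" by (simp add: algebra_simps)
    thus ?thesis using that(3) by simp
  qed
  have "inj_on ev E"
  proof (rule inj_onI)
    fix a b assume ab: "a \<in> E" "b \<in> E" "ev a = ev b"
    show "a = b"
    proof (rule ccontr)
      assume "a \<noteq> b"
      hence "inner (ev a) (ev a) = 0" using orth[OF ab(1,2)] ab(3) by simp
      thus False using ev[OF ab(1)] by simp
    qed
  qed
  moreover have "independent (ev ` E)"
  proof (rule pairwise_orthogonal_independent)
    show "pairwise orthogonal (ev ` E)"
      unfolding pairwise_def orthogonal_def using orth by blast
    show "0 \<notin> ev ` E" using ev by auto
  qed
  ultimately have "finite E"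
    using independent_bound finite_imageD by metis
  thus ?thesis unfolding E_def .
qed

lemma singular_values_finite: "finite (singular_values B)"
proof -
  have "singular_values B = sqrt ` {lam. \<exists>v. v \<noteq> 0 \<and> (transpose B ** B) *v v = lam *s v}"
    unfolding singular_values_def by blast
  thus ?thesis
    using finite_imageI[OF self_adjoint_eigenvalues_finite[OF gram_self_adjoint]] by simp
qed

(* A positive semidefinite self-adjoint operator C with <v, C v> = 0 kills v:
   otherwise moving v slightly in direction -C v makes the form negative. *)
lemma psd_form_zero_imp_kernel:
  fixes C :: "'a::real_inner \<Rightarrow> 'a"
  assumes "linear C"
    and self_adjoint: "\<And>x y. inner (C x) y = inner x (C y)"
    and psd: "\<And>x. 0 \<le> inner x (C x)"
    and zero: "inner v (C v) = 0"
  shows "C v = 0"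
proof (rule ccontr)
  define u where "u = C v"
  define c where "c = inner u (C u)"
  assume "C v \<noteq> 0"
  hence u_pos: "inner u u > 0" unfolding u_def by simp
  have "inner v (C u) = inner u u"
    using self_adjoint[of v u] by (simp add: inner_commute u_def)
  hence expand: "inner (v - t *\<^sub>R u) (C (v - t *\<^sub>R u)) = t * (t * c - 2 * inner u u)" for t
  proof -
    have "C (v - t *\<^sub>R u) = u - t *\<^sub>R C u"
      using \<open>linear C\<close> by (simp add: linear_diff linear_scale u_def)
    hence "inner (v - t *\<^sub>R u) (C (v - t *\<^sub>R u)) = inner (v - t *\<^sub>R u) (u - t *\<^sub>R C u)"
      by (simp only:)
    also have "\<dots> = t * (t * c - 2 * inner u u)"
      using zero \<open>inner v (C u) = inner u u\<close> unfolding u_def[symmetric]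
      by (simp add: inner_diff_left inner_diff_right inner_commute[of u v] c_def algebra_simps)
    finally show ?thesis .
  qed
  define t where "t = inner u u / (c + 1)"
  have "c \<ge> 0" unfolding c_def by (rule psd)
  hence "t > 0" "t * c < inner u u"
    using u_pos unfolding t_def by (simp_all add: field_simps)
  hence "t * (t * c - 2 * inner u u) < 0"
    using u_pos by (intro mult_pos_neg) linarith+
  thus False using psd[of "v - t *\<^sub>R u"] expand by simp
qed

(* By compactness of the unit sphere, |B v|^2 attains its minimum m at some unit
   vector v0, and then m |v|^2 \<le> |B v|^2 everywhere by homogeneity. *)
lemma sphere_minimizer:
  fixes B :: "real^'n^'n"
  obtains v0 where "norm v0 = 1" and "\<And>v. (norm (B *v v0))\<^sup>2 * (norm v)\<^sup>2 \<le> (norm (B *v v))\<^sup>2"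
proof -
  define g where "g v = (norm (B *v v))\<^sup>2" for v :: "real^'n"
  have "sphere (0::real^'n) 1 \<noteq> {}"
    using nonempty_Basis by (auto intro: norm_Basis)
  moreover have "continuous_on (sphere 0 1) g"
    unfolding g_def by (intro continuous_intros linear_continuous_on matrix_vector_mul_linear_gen)
  ultimately obtain v0 where v0: "v0 \<in> sphere 0 1" "\<And>y. y \<in> sphere 0 1 \<Longrightarrow> g v0 \<le> g y"
    using continuous_attains_inf[OF compact_sphere] by blast
  have "g v0 * (norm v)\<^sup>2 \<le> (norm (B *v v))\<^sup>2" for v
  proof (cases "v = 0")
    case False
    have "g v0 \<le> g ((1 / norm v) *\<^sub>R v)"
      using False by (intro v0(2)) simp
    also have "\<dots> = (norm (B *v v))\<^sup>2 / (norm v)\<^sup>2"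
      unfolding g_def by (simp add: matrix_vector_mult_scaleR power_divide)
    finally show ?thesis using False by (simp add: field_simps)
  qed simp
  thus thesis using v0(1) that unfolding g_def by simp
qed

(* The minimum m is an eigenvalue of B\<^sup>T B (with eigenvector v0): apply the previous
   lemma to the positive semidefinite operator B\<^sup>T B - m. *)
lemma minimal_stretch_is_singular_value:
  fixes B :: "real^'n^'n"
  assumes unit: "norm v0 = 1"
    and minimal: "\<And>v. m * (norm v)\<^sup>2 \<le> (norm (B *v v))\<^sup>2"
    and attained: "(norm (B *v v0))\<^sup>2 = m"
  shows "sqrt m \<in> singular_values B"
proof -
  define G where "G = transpose B ** B"
  define C where "C = (\<lambda>x. G *v x - m *\<^sub>R x)"
  have quad: "inner x (C x) = (norm (B *v x))\<^sup>2 - m * (norm x)\<^sup>2" for x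
    by (simp add: C_def G_def inner_diff_right inner_matrix_gram[symmetric] power2_norm_eq_inner)
  have "C v0 = 0"
  proof (rule psd_form_zero_imp_kernel[where C = C])
    show "linear C"
      unfolding C_def linear_iff
      by (simp add: matrix_vector_right_distrib matrix_vector_mult_scaleR algebra_simps)
    show "inner (C x) y = inner x (C y)" for x y
      by (simp add: C_def G_def inner_diff_left inner_diff_right gram_self_adjoint)
    show "0 \<le> inner x (C x)" for x
      using minimal[of x] by (simp add: quad)
    show "inner v0 (C v0) = 0"
      using attained unit by (simp add: quad)
  qed
  hence "G *v v0 = m *s v0" by (simp add: C_def scalar_mult_eq_scaleR)
  moreover have "v0 \<noteq> 0" using unit by auto
  ultimately show ?thesis unfolding singular_values_def G_def by blast
qed

lemma smallest_singular_value_le_stretch: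
  fixes B :: "real^'n^'n"
  shows "smallest_singular_value B * norm x \<le> norm (B *v x)"
proof -
  obtain v0 where v0: "norm v0 = 1" "\<And>v. (norm (B *v v0))\<^sup>2 * (norm v)\<^sup>2 \<le> (norm (B *v v))\<^sup>2"
    using sphere_minimizer[of B] by blast
  define m where "m = (norm (B *v v0))\<^sup>2"
  have "sqrt m \<in> singular_values B"
    using v0 by (intro minimal_stretch_is_singular_value[of v0]) (simp_all add: m_def)
  hence "smallest_singular_value B \<le> sqrt m"
    unfolding smallest_singular_value_def by (intro Min_le singular_values_finite)
  hence "smallest_singular_value B * norm x \<le> sqrt m * norm x"
    by (simp add: mult_right_mono)
  also have "sqrt m * norm x \<le> norm (B *v x)"
    using real_sqrt_le_mono[OF v0(2)[of x]] by (simp add: m_def real_sqrt_mult)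
  finally show ?thesis .
qed

lemma smallest_singular_value_pos_bij:
  fixes B :: "real^'n^'n"
  assumes "smallest_singular_value B > 0"
  shows "bij ((*v) B)"
proof -
  have "x = 0" if "B *v x = 0" for x
    using smallest_singular_value_le_stretch[of B x] that assms
    by (simp add: mult_le_0_iff)
  hence "inj ((*v) B)"
    by (intro injI) (metis eq_iff_diff_eq_0 matrix_vector_mult_diff_distrib)
  moreover from this have "surj ((*v) B)"
    by (intro linear_inj_imp_surj) auto
  ultimately show ?thesis by (rule bijI)
qed

definition half_cube :: "(real^'n) set" where
  "half_cube = {f. \<forall>i. -1/2 \<le> f $ i \<and> f $ i < 1/2}"

lemma half_cube_digits_iff:
  "d \<in> half_cube_digits A \<longleftrightarrow> (\<exists>f \<in> half_cube. real_vec d = map_matrix real_of_int A *v f)"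
  unfolding half_cube_digits_def half_cube_def by blast

lemma half_cube_norm:
  fixes f :: "real^'n"
  assumes "f \<in> half_cube"
  shows "norm f \<le> sqrt (real CARD('n)) / 2"
proof -
  have "(f $ i)\<^sup>2 \<le> 1/4" for i
  proof -
    have "-1/2 \<le> f $ i" "f $ i < 1/2" using assms unfolding half_cube_def by auto
    hence "\<bar>f $ i\<bar> \<le> 1/2" by linarith
    hence "\<bar>f $ i\<bar>\<^sup>2 \<le> (1/2)\<^sup>2" by (rule power_mono) simp
    thus ?thesis by (simp add: power2_eq_square)
  qed
  hence "(norm f)\<^sup>2 \<le> (\<Sum>i\<in>(UNIV::'n set). 1/4)"
    unfolding power2_norm_eq_inner inner_vec_def by (intro sum_mono) (simp add: power2_eq_square)
  also have "\<dots> = (sqrt (real CARD('n)) / 2)\<^sup>2"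
    by (simp add: power_divide)
  finally show ?thesis
    by (rule power2_le_imp_le) simp
qed

lemma lattice_rounding:
  fixes y :: "real^'n"
  obtains z where "y - real_vec z \<in> half_cube"
proof
  define z :: "int^'n" where "z = (\<chi> i. \<lfloor>y $ i + 1/2\<rfloor>)"
  show "y - real_vec z \<in> half_cube"
    unfolding half_cube_def z_def real_vec_def
    using floor_le_iff le_floor_iff by (simp; linarith)
qed

lemma half_cube_translates_disjoint:
  assumes "f \<in> half_cube" "f' \<in> half_cube" "real_vec z + f = real_vec z' + f'"
  shows "z = z'"
proof -
  have "z $ i = z' $ i" for i
  proof -
    have "real_of_int (z $ i - z' $ i) = f' $ i - f $ i"
      using arg_cong[OF assms(3), of "\<lambda>v. v $ i"] by (simp add: real_vec_def)
    moreover have "-1/2 \<le> f $ i" "f $ i < 1/2" "-1/2 \<le> f' $ i" "f' $ i < 1/2"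
      using assms(1,2) unfolding half_cube_def by auto
    hence "\<bar>f' $ i - f $ i\<bar> < 1" by linarith
    ultimately have "\<bar>z $ i - z' $ i\<bar> < 1"
      by (metis of_int_abs of_int_less_1_iff)
    thus ?thesis by simp
  qed
  thus ?thesis by (simp add: vec_eq_iff)
qed

lemma real_vec_add: "real_vec (x + y) = real_vec x + real_vec y"
  by (simp add: real_vec_def vec_eq_iff)

lemma real_vec_diff: "real_vec (x - y) = real_vec x - real_vec y"
  by (simp add: real_vec_def vec_eq_iff)

lemma real_vec_mult: "real_vec (A *v y) = map_matrix real_of_int A *v real_vec y"
  by (simp add: real_vec_def matrix_vector_mult_def vec_eq_iff)

(* The squared norm of a lattice vector is an integer; it serves as a termination measure. *)
lemma norm_real_vec_sq: "(norm (real_vec x))\<^sup>2 = real_of_int (\<Sum>i\<in>UNIV. (x $ i)\<^sup>2)"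
  unfolding power2_norm_eq_inner inner_vec_def by (simp add: real_vec_def power2_eq_square)

(* Division with remainder: writing A^{-1} x = z + f with z \<in> Z^n and f \<in> F gives
   x = A z + d with the digit d = x - A z = A f. *)
lemma division_with_digit:
  fixes A :: "int^'n^'n"
  assumes "smallest_singular_value (map_matrix real_of_int A) > 0"
  obtains z f where "f \<in> half_cube"
    and "real_vec x = map_matrix real_of_int A *v (real_vec z + f)"
    and "x - A *v z \<in> half_cube_digits A"
proof -
  define B where "B = map_matrix real_of_int A"
  obtain y where y: "real_vec x = B *v y"
    using smallest_singular_value_pos_bij[OF assms] unfolding B_def by (metis bij_pointE)
  obtain z where f: "y - real_vec z \<in> half_cube" by (rule lattice_rounding)
  have x: "real_vec x = B *v (real_vec z + (y - real_vec z))" using y by simp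
  moreover have "real_vec (x - A *v z) = B *v (y - real_vec z)"
    unfolding real_vec_diff real_vec_mult x by (simp add: B_def matrix_vector_mult_diff_distrib)
  ultimately show thesis
    using that f half_cube_digits_iff unfolding B_def by blast
qed

(* D is a complete residue system modulo A Z^n: existence is division with remainder,
   uniqueness follows from invertibility of A and disjointness of the translates of F. *)
lemma half_cube_digits_complete_residue_system:
  fixes A :: "int^'n^'n"
  assumes sv_pos: "smallest_singular_value (map_matrix real_of_int A) > 0"
  shows "complete_residue_system A (half_cube_digits A)"
  unfolding complete_residue_system_def
proof
  fix x :: "int^'n"
  define B where "B = map_matrix real_of_int A"
  obtain z f where f: "f \<in> half_cube" and x: "real_vec x = B *v (real_vec z + f)"
    and d: "x - A *v z \<in> half_cube_digits A"
    using division_with_digit[OF sv_pos] unfolding B_def by blast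
  show "\<exists>!d. d \<in> half_cube_digits A \<and> (\<exists>y. x = A *v y + d)"
  proof (rule ex1I[of _ "x - A *v z"])
    show "x - A *v z \<in> half_cube_digits A \<and> (\<exists>y. x = A *v y + (x - A *v z))"
      using d by auto
  next
    fix d' assume "d' \<in> half_cube_digits A \<and> (\<exists>y. x = A *v y + d')"
    then obtain z' f' where x': "x = A *v z' + d'" and f': "f' \<in> half_cube"
      and d': "real_vec d' = B *v f'"
      unfolding half_cube_digits_iff B_def by blast
    have "B *v (real_vec z + f) = B *v (real_vec z' + f')"
      using x x' d' by (simp add: real_vec_add real_vec_mult B_def matrix_vector_right_distrib)
    hence "real_vec z + f = real_vec z' + f'"
      using bij_is_inj[OF smallest_singular_value_pos_bij[OF sv_pos]] unfolding B_def
      by (simp add: inj_eq)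
    hence "z = z'" using f f' half_cube_translates_disjoint by blast
    thus "d' = x - A *v z" using x' by simp
  qed
qed

(* Lattice vectors of norm less than \<mu>/2 are digits, since their preimage under A has
   norm less than 1/2 and therefore lies in F. *)
lemma small_vector_is_digit:
  fixes A :: "int^'n^'n"
  assumes sv_pos: "smallest_singular_value (map_matrix real_of_int A) > 0"
    and small: "norm (real_vec x) < smallest_singular_value (map_matrix real_of_int A) / 2"
  shows "x \<in> half_cube_digits A"
proof -
  define B where "B = map_matrix real_of_int A"
  obtain y where y: "real_vec x = B *v y"
    using smallest_singular_value_pos_bij[OF sv_pos] unfolding B_def by (metis bij_pointE)
  have "smallest_singular_value B * norm y < smallest_singular_value B * (1/2)"
    using smallest_singular_value_le_stretch[of B y] small y unfolding B_def by simp
  hence "norm y < 1/2" using sv_pos unfolding B_def by simp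
  hence "-1/2 \<le> y $ i \<and> y $ i < 1/2" for i
    using component_le_norm_cart[of y i] by (simp add: abs_le_iff)
  hence "y \<in> half_cube" unfolding half_cube_def by blast
  thus ?thesis using y half_cube_digits_iff unfolding B_def by blast
qed

(* The key estimate: if \<mu> > 2 sqrt n and |x| \<ge> \<mu>/2, then the quotient z in x = A(z + f)
   is strictly shorter than x, because |z + f| \<le> |x|/\<mu> < |x|/2 and |f| \<le> sqrt n/2 < |x|/2. *)
lemma quotient_shorter:
  fixes B :: "real^'n^'n"
  assumes sv: "smallest_singular_value B > 2 * sqrt (real CARD('n))"
    and large: "norm x \<ge> smallest_singular_value B / 2"
    and f: "f \<in> half_cube"
    and x: "x = B *v (z + f)"
  shows "norm z < norm x"
proof -
  define \<mu> where "\<mu> = smallest_singular_value B"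
  have "sqrt (real CARD('n)) \<ge> 1" by simp
  hence \<mu>_gt_2: "\<mu> > 2" using sv unfolding \<mu>_def by linarith
  have "\<mu> * norm (z + f) \<le> norm x"
    using smallest_singular_value_le_stretch[of B "z + f"] x unfolding \<mu>_def by simp
  hence "norm (z + f) \<le> norm x / \<mu>"
    using \<mu>_gt_2 by (simp add: pos_le_divide_eq mult.commute)
  also have "\<dots> < norm x / 2"
    using \<mu>_gt_2 large unfolding \<mu>_def by (intro divide_strict_left_mono) auto
  finally have "norm (z + f) < norm x / 2" .
  moreover have "norm f < norm x / 2"
    using half_cube_norm[OF f] sv large unfolding \<mu>_def by linarith
  moreover have "norm z \<le> norm (z + f) + norm f"
    by (metis add_diff_cancel_right' norm_triangle_ineq4)
  ultimately show ?thesis by linarith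
qed

lemma matrix_vector_mult_sum:
  fixes A :: "'a::semiring_1^'n^'m"
  shows "A *v (\<Sum>j\<in>S. g j) = (\<Sum>j\<in>S. A *v g j)"
  by (induction S rule: infinite_finite_induct) (simp_all add: matrix_vector_right_distrib)

definition has_radix_expansion :: "int^'n^'n \<Rightarrow> (int^'n) set \<Rightarrow> int^'n \<Rightarrow> bool" where
  "has_radix_expansion A D x \<longleftrightarrow>
     (\<exists>(N::nat) ds. (\<forall>j\<le>N. ds j \<in> D) \<and> x = (\<Sum>j\<le>N. matpow A j *v ds j))"

lemma digit_has_radix_expansion:
  assumes "d \<in> D"
  shows "has_radix_expansion A D d"
  unfolding has_radix_expansion_def using assms by (intro exI[of _ 0] exI[of _ "\<lambda>_. d"]) simp

lemma has_radix_expansion_step: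
  fixes A :: "int^'n^'n"
  assumes "has_radix_expansion A D z" and "d \<in> D"
  shows "has_radix_expansion A D (A *v z + d)"
proof -
  obtain N ds where ds: "\<forall>j\<le>N. ds j \<in> D" and z: "z = (\<Sum>j\<le>N. matpow A j *v ds j)"
    using assms(1) unfolding has_radix_expansion_def by blast
  define ds' where "ds' j = (case j of 0 \<Rightarrow> d | Suc k \<Rightarrow> ds k)" for j
  have "A *v z = (\<Sum>j\<le>N. matpow A (Suc j) *v ds j)"
    unfolding z by (simp add: matrix_vector_mult_sum matrix_vector_mul_assoc)
  hence "A *v z + d = (\<Sum>j\<le>Suc N. matpow A j *v ds' j)"
    unfolding sum.atMost_Suc_shift ds'_def by (simp add: add.commute)
  moreover have "\<forall>j\<le>Suc N. ds' j \<in> D"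
    using ds assms(2) by (auto simp: ds'_def split: nat.split)
  ultimately show ?thesis unfolding has_radix_expansion_def by blast
qed

(* Every lattice vector has an expansion, by induction on its squared norm: short vectors
   are digits, and otherwise x = A z + d with z strictly shorter. *)
lemma all_have_radix_expansion:
  fixes A :: "int^'n^'n"
  assumes sv: "smallest_singular_value (map_matrix real_of_int A) > 2 * sqrt (real CARD('n))"
  shows "has_radix_expansion A (half_cube_digits A) x"
proof (induction "nat (\<Sum>i\<in>UNIV. (x $ i)\<^sup>2)" arbitrary: x rule: less_induct)
  case less
  define B where "B = map_matrix real_of_int A"
  define \<mu> where "\<mu> = smallest_singular_value B"
  have "sqrt (real CARD('n)) \<ge> 1" by simp
  hence \<mu>_pos: "\<mu> > 0" using sv unfolding \<mu>_def B_def by linarith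
  show ?case
  proof (cases "norm (real_vec x) < \<mu> / 2")
    case True
    thus ?thesis
      using small_vector_is_digit[OF \<mu>_pos[unfolded \<mu>_def B_def]] \<mu>_def B_def
      by (simp add: digit_has_radix_expansion)
  next
    case False
    obtain z f where f: "f \<in> half_cube" and x: "real_vec x = B *v (real_vec z + f)"
      and d: "x - A *v z \<in> half_cube_digits A"
      using division_with_digit[OF \<mu>_pos[unfolded \<mu>_def B_def]] unfolding B_def by blast
    have "norm (real_vec z) < norm (real_vec x)"
      using quotient_shorter[OF sv[folded B_def] _ f x] False unfolding \<mu>_def by simp
    hence "(\<Sum>i\<in>UNIV. (z $ i)\<^sup>2) < (\<Sum>i\<in>UNIV. (x $ i)\<^sup>2)"
      using norm_real_vec_sq[of z] norm_real_vec_sq[of x] power_strict_mono[of _ _ 2]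
      by (metis norm_ge_zero of_int_less_iff zero_less_numeral)
    moreover have "0 \<le> (\<Sum>i\<in>UNIV. (z $ i)\<^sup>2)" by (intro sum_nonneg) simp
    ultimately have "nat (\<Sum>i\<in>UNIV. (z $ i)\<^sup>2) < nat (\<Sum>i\<in>UNIV. (x $ i)\<^sup>2)"
      by linarith
    hence "has_radix_expansion A (half_cube_digits A) z" by (rule less)
    from has_radix_expansion_step[OF this d] show ?thesis by simp
  qed
qed

theorem mainTheorem6:
  fixes A :: "int^'n^'n"
  assumes "dilation_matrix A"
    and "smallest_singular_value (map_matrix real_of_int A) > 2 * sqrt (real CARD('n))"
  shows "radix_representation A (half_cube_digits A)"
proof -
  have "smallest_singular_value (map_matrix real_of_int A) > 0"
    using assms(2) real_sqrt_ge_zero[of "real CARD('n)"] by linarith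
  hence "complete_residue_system A (half_cube_digits A)"
    by (rule half_cube_digits_complete_residue_system)
  moreover have "has_radix_expansion A (half_cube_digits A) x" for x
    using assms(2) by (rule all_have_radix_expansion)
  ultimately show ?thesis
    unfolding radix_representation_def has_radix_expansion_def by blast
qed

end
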